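(* Let $\delta_j,\delta_k$ be coprime integers with $1<\delta_j<\delta_k$, let $r=\delta_k\bmod\delta_j$ and let $f\colon \mathcal B(\delta_j,r)\to\mathcal B(\delta_k,\delta_j)$, $f(x',y')=(y',\,x'-y'\lfloor \delta_k/\delta_j\rfloor)$. Let $(1,y)\in\mathcal B(\delta_k,\delta_j)$. Then $(1,y)\notin f(\mathcal B(\delta_j,r))$ if and only if $-\lfloor\delta_k/\delta_j\rfloor<y\le 0$.
   Context: For coprime positive integers $p,q$ and $i\in\{1,\ldots,\max\{p,q\}\}$, the $\lambda$-B\'ezout couple of $i$ for $(p,q)$ is the unique $(x,y)\in\mathbb Z^2$ with $xp+yq=i$ and $0<y\le p$, and the $\mu$-B\'ezout couple of $i$ for $(p,q)$ is the unique $(x,y)\in\mathbb Z^2$ with $xp+yq=i$ and $0<x\le q$. $\mathcal B(p,q)$ denotes the set of all $\lambda$- and $\mu$-B\'ezout couples for $(p,q)$ (for all such $i$). The map $f$ takes values in $\mathcal B(\delta_k,\delta_j)$. *)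

theory Defs
  imports Main
begin

definition lambda_couples :: "int \<Rightarrow> int \<Rightarrow> (int \<times> int) set" where
  "lambda_couples p q = {(x, y). \<exists>i. 1 \<le> i \<and> i \<le> max p q \<and> x * p + y * q = i \<and> 0 < y \<and> y \<le> p}"

definition mu_couples :: "int \<Rightarrow> int \<Rightarrow> (int \<times> int) set" where
  "mu_couples p q = {(x, y). \<exists>i. 1 \<le> i \<and> i \<le> max p q \<and> x * p + y * q = i \<and> 0 < x \<and> x \<le> q}"

definition bezout_couples :: "int \<Rightarrow> int \<Rightarrow> (int \<times> int) set" where
  "bezout_couples p q = lambda_couples p q \<union> mu_couples p q"

definition fmap :: "int \<Rightarrow> int \<Rightarrow> int \<times> int \<Rightarrow> int \<times> int" where
  "fmap dj dk = (\<lambda>(x', y'). (y', x' - y' * (dk div dj)))"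

end

theory Submission
  imports Defs
begin

text \<open>A couple (x,y) lies in the image of f exactly when (y + \<lfloor>\<delta>k/\<delta>j\<rfloor>, 1) is a
B\'ezout couple for (\<delta>j, r); since \<delta>k + y \<delta>j = (y + \<lfloor>\<delta>k/\<delta>j\<rfloor>) \<delta>j + r with 0 < r < \<delta>j,
this happens for x = 1 only when y = -\<lfloor>\<delta>k/\<delta>j\<rfloor>. On the other hand (1,y) \<in> B(\<delta>k,\<delta>j)
forces 1 \<le> \<delta>k + y \<delta>j \<le> \<delta>k, i.e. -\<lfloor>\<delta>k/\<delta>j\<rfloor> \<le> y \<le> 0.\<close>

lemma bezout_couples_combination_bounds:
  assumes "(x, y) \<in> bezout_couples p q"
  shows "1 \<le> x * p + y * q" and "x * p + y * q \<le> max p q"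
  using assms unfolding bezout_couples_def lambda_couples_def mu_couples_def by auto

lemma snd_one_in_bezout_couples_iff:
  assumes "0 < p"
  shows "(x, 1) \<in> bezout_couples p q \<longleftrightarrow> 1 \<le> x * p + q \<and> x * p + q \<le> max p q"
  using assms bezout_couples_combination_bounds[of x 1 p q]
  unfolding bezout_couples_def lambda_couples_def by auto

lemma in_image_fmap_iff:
  "(a, b) \<in> fmap dj dk ` S \<longleftrightarrow> (b + a * (dk div dj), a) \<in> S"
proof -
  have "fmap dj dk (x', y') = (a, b) \<longleftrightarrow> (x', y') = (b + a * (dk div dj), a)" for x' y'
    unfolding fmap_def by auto
  then show ?thesis by (metis (no_types, lifting) image_iff prod.collapse)
qed

lemma zero_less_mult_add_iff:
  fixes d r t :: int
  assumes "0 < r" "r \<le> d"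
  shows "0 < t * d + r \<longleftrightarrow> 0 \<le> t"
proof
  assume "0 < t * d + r"
  show "0 \<le> t"
  proof (rule ccontr)
    assume "\<not> 0 \<le> t"
    then have "t * d \<le> - d" using assms by (intro mult_right_mono[of t "-1", simplified]) auto
    with \<open>0 < t * d + r\<close> assms show False by simp
  qed
next
  assume "0 \<le> t"
  then show "0 < t * d + r" using assms by (simp add: add_nonneg_pos)
qed

lemma mult_add_between_one_and_modulus_iff:
  fixes d r t :: int
  assumes "0 < r" "r < d"
  shows "1 \<le> t * d + r \<and> t * d + r \<le> d \<longleftrightarrow> t = 0"
proof -
  have "1 \<le> t * d + r \<longleftrightarrow> 0 \<le> t"
    using zero_less_mult_add_iff[of r d t] assms by linarith
  moreover have "t * d + r \<le> d \<longleftrightarrow> \<not> 0 < (t - 1) * d + r"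
    by (simp add: algebra_simps not_less)
  then have "t * d + r \<le> d \<longleftrightarrow> t \<le> 0"
    using zero_less_mult_add_iff[of r d "t - 1"] assms by linarith
  ultimately show ?thesis by auto
qed

lemma coprime_mod_nonzero:
  fixes a b :: int
  assumes "coprime a b" "1 < a"
  shows "b mod a \<noteq> 0"
proof
  assume "b mod a = 0"
  then have "is_unit a" using assms(1) coprime_common_divisor[of a b a] by auto
  with assms(2) show False by auto
qed

theorem proposition3p7:
  fixes dj dk y :: int
  assumes "coprime dj dk" and "1 < dj" and "dj < dk"
    and "(1, y) \<in> bezout_couples dk dj"
  shows "(1, y) \<notin> fmap dj dk ` bezout_couples dj (dk mod dj)
         \<longleftrightarrow> (- (dk div dj) < y \<and> y \<le> 0)"
proof -
  define q r where "q = dk div dj" and "r = dk mod dj"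
  have r: "0 < r" "r < dj"
    using coprime_mod_nonzero[OF assms(1,2)] pos_mod_sign[of dj dk] pos_mod_bound[of dj dk] assms(2)
    unfolding r_def by linarith+
  have combination: "dk + y * dj = (y + q) * dj + r"
    unfolding q_def r_def by (simp add: algebra_simps)
  have bounds: "1 \<le> dk + y * dj" "dk + y * dj \<le> dk"
    using bezout_couples_combination_bounds[OF assms(4)] assms(3) by auto
  have y: "0 \<le> y + q" "y \<le> 0"
  proof -
    show "0 \<le> y + q"
      using zero_less_mult_add_iff[of r dj "y + q"] r bounds(1) unfolding combination by linarith
    show "y \<le> 0"
      using bounds(2) assms(2) by (simp add: mult_le_0_iff)
  qed
  have "(1, y) \<in> fmap dj dk ` bezout_couples dj r \<longleftrightarrow> y + q = 0"
    using snd_one_in_bezout_couples_iff[of dj "y + q" r]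
      mult_add_between_one_and_modulus_iff[OF r, of "y + q"] r
    unfolding in_image_fmap_iff q_def by simp
  with y show ?thesis unfolding r_def q_def by auto
qed

end
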